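(* Let $t_j^i=\binom{i}{j}$ for $0\le j\le i$, and let $h_{j,k}^i$ ($0\le k\le i$, $0\le j\le i-k$) be defined by $h_{j,0}^i=t_j^i$ and $h_{j,k}^i=h_{j,k-1}^{i-1}+h_{j,k-1}^{i}+h_{j+1,k-1}^{i}$ for $k\ge 1$. Then for any $0\leq k \leq i$, $0\leq j \leq i-k$, $$h_{j,k}^i=\sum_{\ell=0}^{k}\binom{2\ell+i-k}{\ell+j}\binom{k}{\ell}.$$ *)

theory Defs
  imports Main
begin

text \<open>t i j = binomial i j; hh i j k = h^i_{j,k}. Defined for all naturals; the
recursion only refers to in-domain values when (i,j,k) is in the domain
0 <= k <= i, 0 <= j <= i - k.\<close>

fun hh :: "nat \<Rightarrow> nat \<Rightarrow> nat \<Rightarrow> nat" where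
  "hh i j 0 = i choose j"
| "hh i j (Suc k) = hh (i - 1) j k + hh i j k + hh i (j + 1) k"

end

theory Submission
  imports Defs
begin

text \<open>Write S(n,j,k) for the right-hand side with n = i - k. Splitting the factor
(k+1 choose l) by Pascal's rule and applying Pascal's rule once more to the first binomial
shows that S satisfies the defining recursion of h, and S(n,j,0) = (n choose j); so the two
agree by induction on k.\<close>

lemma sum_mult_binomial_Suc:
  fixes f :: "nat \<Rightarrow> 'a :: comm_semiring_1"
  shows "(\<Sum>l\<le>Suc k. f l * of_nat (Suc k choose l))
       = (\<Sum>l\<le>k. f l * of_nat (k choose l)) + (\<Sum>l\<le>k. f (Suc l) * of_nat (k choose l))"
proof -
  have shifted: "(\<Sum>l\<le>k. f (Suc l) * of_nat (k choose Suc l)) + f 0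
      = (\<Sum>l\<le>k. f l * of_nat (k choose l))"
  proof -
    have "(\<Sum>l\<le>Suc k. f l * of_nat (k choose l))
        = f 0 + (\<Sum>l\<le>k. f (Suc l) * of_nat (k choose Suc l))"
      by (subst sum.atMost_Suc_shift) simp
    then show ?thesis
      by (simp add: sum.atMost_Suc binomial_eq_0 add.commute)
  qed
  have "(\<Sum>l\<le>Suc k. f l * of_nat (Suc k choose l))
      = f 0 + (\<Sum>l\<le>k. f (Suc l) * of_nat (k choose l) + f (Suc l) * of_nat (k choose Suc l))"
    by (subst sum.atMost_Suc_shift) (simp add: distrib_left del: sum.atMost_Suc)
  also have "\<dots> = (\<Sum>l\<le>k. f l * of_nat (k choose l)) + (\<Sum>l\<le>k. f (Suc l) * of_nat (k choose l))"
    by (simp add: sum.distrib flip: shifted) (simp add: ac_simps)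
  finally show ?thesis .
qed

definition hh_sum :: "nat \<Rightarrow> nat \<Rightarrow> nat \<Rightarrow> nat" where
  "hh_sum n j k = (\<Sum>l\<le>k. ((2 * l + n) choose (l + j)) * (k choose l))"

lemma hh_sum_0 [simp]: "hh_sum n j 0 = n choose j"
  by (simp add: hh_sum_def)

lemma hh_sum_Suc:
  "hh_sum n j (Suc k) = hh_sum n j k + hh_sum (Suc n) j k + hh_sum (Suc n) (Suc j) k"
proof -
  have pascal: "(2 * Suc l + n) choose (Suc l + j)
      = ((2 * l + Suc n) choose (l + j)) + ((2 * l + Suc n) choose (l + Suc j))" for l
    using binomial_Suc_Suc[of "2 * l + Suc n" "l + j"] by simp
  show ?thesis
    using sum_mult_binomial_Suc[of "\<lambda>l. (2 * l + n) choose (l + j)" k]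
    by (simp add: hh_sum_def pascal sum.distrib algebra_simps)
qed

lemma hh_eq_hh_sum: "k \<le> i \<Longrightarrow> hh i j k = hh_sum (i - k) j k"
proof (induction k arbitrary: i j)
  case 0
  then show ?case by simp
next
  case (Suc k)
  then have "i - k = Suc (i - Suc k)" and "i - 1 - k = i - Suc k" by simp_all
  with Suc show ?case by (simp add: hh_sum_Suc)
qed

theorem theorem9:
  fixes i j k :: nat
  assumes "k \<le> i" and "j \<le> i - k"
  shows "hh i j k = (\<Sum>l = 0..k. ((2 * l + i - k) choose (l + j)) * (k choose l))"
proof -
  have "hh i j k = hh_sum (i - k) j k"
    using assms(1) by (rule hh_eq_hh_sum)
  also have "\<dots> = (\<Sum>l = 0..k. ((2 * l + i - k) choose (l + j)) * (k choose l))"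
    unfolding hh_sum_def atLeast0AtMost using assms(1) by (intro sum.cong) auto
  finally show ?thesis .
qed

end
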